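(* Let $\ell_0\ge 2$ be an integer and let $\varphi_{\ell,k},\psi_{\ell,k}$ be the periodized, level-$\ell$ scaling functions and wavelets of the biorthogonal B-spline wavelet construction of order $(2,2)$ described in the context, and $\xi_q(x)=e^{2\pi i q x}$. Then for every integer $\ell\ge \ell_0$, every $k\in\{0,1,\dots,2^\ell-1\}$, every $q\in\mathbb{Z}\setminus\{0\}$, every $(\alpha_1,\alpha_2)\in\{0,1\}^2$ and every $\gamma\in[0,2]$, $$|(D^{\alpha_1}\varphi_{\ell,k},D^{\alpha_2}\xi_q)|\le 2^{\alpha_1+\alpha_2}\,2^{(\frac32-\gamma)\ell}\,|\pi q|^{\gamma-2+\alpha_1+\alpha_2},$$ $$|(D^{\alpha_1}\psi_{\ell,k},D^{\alpha_2}\xi_q)|\le 2^{\alpha_1+\alpha_2+1-\gamma}\,\|\mathbf b\|_2\,\|\mathbf b\|_0^{1/2}\,2^{(\frac32-\gamma)\ell}\,|\pi q|^{\gamma-2+\alpha_1+\alpha_2}.$$ Moreover, for $q=0$: $|(\varphi_{\ell,k}',\xi_0')|=|(\psi_{\ell,k}',\xi_0')|=0$, $|(\varphi_{\ell,k}',\xi_0)|=|(\psi_{\ell,k}',\xi_0)|=0$, $|(\varphi_{\ell,k},\xi_0)|=2^{-\ell/2}$ and $|(\psi_{\ell,k},\xi_0)|=0$.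
   Context: Functions are complex-valued on $\mathcal{D}=(0,1)$, $(u,v)=\int_0^1 u(x)\overline{v(x)}\,dx$, $D^0u=u$, $D^1u=u'$ (distributional derivative). Let $\varphi(x)=\max\{0,1-|x|\}$ be the hat function (the primal scaling function of the biorthogonal B-spline wavelets of order $(d,\tilde d)=(2,2)$, with primal filter $\mathbf a_{[-1:1]}=[\tfrac12,1,\tfrac12]$, dual filter $\tilde{\mathbf a}_{[-2:2]}=[-\tfrac14,\tfrac12,\tfrac32,\tfrac12,-\tfrac14]$), and let the mother wavelet be $\psi(x)=\sum_{j=-1}^{3} b_j\varphi(2x-j)$ with primal wavelet filter $\mathbf b=(b_{-1},b_0,b_1,b_2,b_3)=(\tfrac14,\tfrac12,-\tfrac32,\tfrac12,\tfrac14)$; $\|\mathbf b\|_2$ is its Euclidean norm and $\|\mathbf b\|_0$ its number of nonzero entries. For $\ell\in\mathbb{N}_0$, $k\in\mathbb{Z}$ set $\varphi_{\ell,k}(x)=2^{\ell/2}\varphi(2^\ell x-k)$ and $\psi_{\ell,k}(x)=2^{\ell/2}\psi(2^\ell x-k)$; in the statement these are replaced by their 1-periodizations $f^{\rm per}(x)=\sum_{j\in\mathbb{Z}}f(x+j)$ restricted to $(0,1)$, indexed by $k\in\{0,\dots,2^\ell-1\}$. *)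

theory Defs
  imports "HOL-Analysis.Analysis"
begin

definition hat :: "real \<Rightarrow> real" where
  "hat x = max 0 (1 - \<bar>x\<bar>)"

definition bfilt :: "int \<Rightarrow> real" where
  "bfilt j = (if j = -1 then 1/4 else if j = 0 then 1/2 else if j = 1 then -3/2
              else if j = 2 then 1/2 else if j = 3 then 1/4 else 0)"

definition bnorm2 :: real where
  "bnorm2 = sqrt (\<Sum>j\<in>{-1..3}. (bfilt j)\<^sup>2)"

definition bnorm0 :: nat where
  "bnorm0 = card {j\<in>{-1..3::int}. bfilt j \<noteq> 0}"

definition psi :: "real \<Rightarrow> real" where
  "psi x = (\<Sum>j\<in>{-1..3::int}. bfilt j * hat (2 * x - of_int j))"

definition phi_lk :: "nat \<Rightarrow> int \<Rightarrow> real \<Rightarrow> real" where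
  "phi_lk l k x = 2 powr (real l / 2) * hat (2 ^ l * x - of_int k)"

definition psi_lk :: "nat \<Rightarrow> int \<Rightarrow> real \<Rightarrow> real" where
  "psi_lk l k x = 2 powr (real l / 2) * psi (2 ^ l * x - of_int k)"

definition per :: "(real \<Rightarrow> real) \<Rightarrow> real \<Rightarrow> complex" where
  "per f x = complex_of_real (infsum (\<lambda>j::int. f (x + of_int j)) UNIV)"

definition xi :: "int \<Rightarrow> real \<Rightarrow> complex" where
  "xi q x = exp (2 * complex_of_real pi * \<i> * of_int q * of_real x)"

text \<open>D^0 u = u, D^1 u = derivative (a.e. derivative; the functions involved are
  Lipschitz, so this coincides with the distributional derivative as an L^1 function).\<close>
definition Dop :: "nat \<Rightarrow> (real \<Rightarrow> complex) \<Rightarrow> real \<Rightarrow> complex" where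
  "Dop a u = (if a = 0 then u else (\<lambda>x. vector_derivative u (at x)))"

definition ip :: "(real \<Rightarrow> complex) \<Rightarrow> (real \<Rightarrow> complex) \<Rightarrow> complex" where
  "ip u v = (LINT x:{0<..<1}|lborel. u x * cnj (v x))"

end

theory Submission
  imports Defs
begin

text \<open>Both \<open>\<phi>\<^sub>l\<^sub>,\<^sub>k\<close> and \<open>\<psi>\<^sub>l\<^sub>,\<^sub>k\<close> are finite combinations
  \<open>\<Sum>\<^sub>j w\<^sub>j hat (s x - m\<^sub>j)\<close> of dilated and translated hat functions. For a continuous,
  compactly supported \<open>f\<close> the Fourier coefficients of the periodization are values of the
  Fourier transform of \<open>f\<close>, and for the hat function these are explicit:
  \<open>|\<integral> hat (s x - m) exp (-2\<pi>iqx) dx| = s sin\<^sup>2(\<pi>q/s) / (\<pi>q)\<^sup>2\<close>.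
  The inequality \<open>sin\<^sup>2 t \<le> |t| powr \<gamma>\<close> for \<open>0 \<le> \<gamma> \<le> 2\<close> turns this into the decay in \<open>q\<close>, and
  each derivative costs a factor \<open>2\<pi>|q|\<close>: on the exponential directly, on the periodization
  by integration by parts over a period.\<close>

definition freq :: "int \<Rightarrow> complex" where
  "freq q = 2 * complex_of_real pi * \<i> * of_int q"

lemma xi_eq_exp: "xi q x = exp (freq q * of_real x)"
  by (simp add: xi_def freq_def)

lemma cnj_xi: "cnj (xi q x) = exp (- freq q * of_real x)"
  unfolding xi_def freq_def by (subst exp_cnj) simp

lemma exp_freq_periodic: "exp (- (freq q * (of_real x + of_int j))) = exp (- freq q * of_real x)"
proof -
  have "exp (- (freq q * (of_real x + of_int j)))
      = exp (- freq q * of_real x) * exp (2 * of_int (- q * j) * pi * \<i>)"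
    by (simp add: freq_def exp_add[symmetric] algebra_simps)
  also have "exp (2 * of_int (- q * j) * pi * \<i>) = 1"
    by (rule exp_integer_2pi) simp
  finally show ?thesis by simp
qed

lemma norm_freq: "cmod (freq q) = 2 * pi * \<bar>of_int q\<bar>"
  by (simp add: freq_def norm_mult)

lemma has_vector_derivative_exp_linear:
  fixes c :: complex
  shows "((\<lambda>x. exp (c * of_real x)) has_vector_derivative c * exp (c * of_real x)) (at x within S)"
proof -
  have "((\<lambda>z. exp (c * z)) has_field_derivative c * exp (c * of_real x)) (at (of_real x))"
    by (auto intro!: derivative_eq_intros)
  from has_vector_derivative_real_field[OF this] show ?thesis
    by (rule has_vector_derivative_at_within)
qed

lemma Dop_1_xi: "Dop (Suc 0) (xi q) = (\<lambda>x. freq q * xi q x)"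
proof
  fix x
  have "(xi q has_vector_derivative freq q * xi q x) (at x)"
    unfolding xi_eq_exp[abs_def] by (rule has_vector_derivative_exp_linear)
  then show "Dop (Suc 0) (xi q) x = freq q * xi q x"
    unfolding Dop_def by (simp add: vector_derivative_at)
qed

lemma ip_scale_right: "ip u (\<lambda>x. c * v x) = cnj c * ip u v"
proof -
  have "ip u (\<lambda>x. c * v x) = (LINT x:{0<..<1}|lborel. cnj c * (u x * cnj (v x)))"
    unfolding ip_def by (simp add: algebra_simps)
  then show ?thesis unfolding ip_def by simp
qed

section \<open>Periodization of a compactly supported function\<close>

lemma sum_integrals_unit_intervals:
  fixes h :: "real \<Rightarrow> complex"
  assumes "continuous_on UNIV h"
  shows "(\<Sum>j\<in>{a..<a + int n}. integral {of_int j..of_int j + 1} h)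
       = integral {of_int a..of_int a + real n} h"
proof (induction n)
  case 0 then show ?case by simp
next
  case (Suc n)
  have "{a..<a + int (Suc n)} = insert (a + int n) {a..<a + int n}" by auto
  then have "(\<Sum>j\<in>{a..<a + int (Suc n)}. integral {of_int j..of_int j + 1} h)
     = integral {of_int a + real n..of_int a + real n + 1} h + integral {of_int a..of_int a + real n} h"
    using Suc by simp
  also have "\<dots> = integral {of_int a..of_int a + real (Suc n)} h"
    using Henstock_Kurzweil_Integration.integral_combine[where a="of_int a" and c="of_int a + real n"
        and b="of_int a + real (Suc n)" and f=h]
      integrable_continuous_real[where a="of_int a" and b="of_int a + real (Suc n)" and f=h]
      continuous_on_subset[OF assms]
    by (simp add: add_ac)
  finally show ?case .
qed

locale pw_differentiable_bump =
  fixes f :: "real \<Rightarrow> real" and N :: nat and T :: "real set"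
  assumes continuous: "continuous_on UNIV f"
    and support: "\<And>y. real N < \<bar>y\<bar> \<Longrightarrow> f y = 0"
    and finite_T: "finite T"
    and differentiable: "\<And>y. y \<notin> T \<Longrightarrow> f differentiable (at y)"
begin

text \<open>On \<open>(-1, 2)\<close> only the translates in \<open>shifts\<close> meet the support of \<open>f\<close>.\<close>

definition shifts :: "int set" where "shifts = {-int N - 2..int N + 2}"

definition per_sum :: "real \<Rightarrow> real" where "per_sum x = (\<Sum>j\<in>shifts. f (x + of_int j))"

lemma per_eq_per_sum:
  assumes "-1 < x" "x < 2"
  shows "per f x = of_real (per_sum x)"
proof -
  have "infsum (\<lambda>j::int. f (x + of_int j)) UNIV = infsum (\<lambda>j::int. f (x + of_int j)) shifts"
  proof (rule infsum_cong_neutral)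
    fix j assume "j \<in> UNIV - shifts"
    then have "j < -int N - 2 \<or> j > int N + 2" by (auto simp: shifts_def)
    then have "real N < \<bar>x + of_int j\<bar>"
      using assms by (auto; linarith)
    then show "f (x + of_int j) = 0" by (rule support)
  qed auto
  then show ?thesis unfolding per_def per_sum_def by (simp add: shifts_def)
qed

lemma continuous_on_per_sum: "continuous_on S per_sum"
  unfolding per_sum_def
  by (intro continuous_on_sum continuous_on_compose2[OF continuous]) (auto intro: continuous_intros)

lemma continuous_on_per_exp: "continuous_on {0..1} (\<lambda>x. per f x * exp (c * of_real x))"
proof -
  have "continuous_on {0..1} (\<lambda>x. of_real (per_sum x) * exp (c * of_real x))"
    by (intro continuous_intros continuous_on_per_sum)
  then show ?thesis
    by (rule continuous_on_eq) (auto simp: per_eq_per_sum)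
qed

lemma ip_per_xi:
  "ip (per f) (xi q) = integral {0..1} (\<lambda>x. per f x * exp (- freq q * of_real x))"
proof -
  have "set_integrable lborel {0..1} (\<lambda>x. per f x * exp (- freq q * of_real x))"
    unfolding set_integrable_def
    by (rule borel_integrable_compact[OF _ continuous_on_per_exp]) auto
  then have "set_integrable lborel {0<..<1} (\<lambda>x. per f x * exp (- freq q * of_real x))"
    by (rule set_integrable_subset) auto
  then show ?thesis
    unfolding ip_def cnj_xi
    by (simp add: set_borel_integral_eq_integral integral_open_interval_real)
qed

lemma ip_per_xi_eq_integral:
  "ip (per f) (xi q) = integral {- real N - 2..real N + 3} (\<lambda>x. of_real (f x) * exp (- freq q * of_real x))"
proof -
  let ?h = "\<lambda>x. of_real (f x) * exp (- freq q * of_real x)"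
  have cont_h: "continuous_on S ?h" for S
    by (intro continuous_intros continuous_on_compose2[OF continuous]) auto
  have "ip (per f) (xi q) = integral {0..1} (\<lambda>x. \<Sum>j\<in>shifts. ?h (x + of_int j))"
    unfolding ip_per_xi
    by (rule integral_cong) (simp add: per_eq_per_sum per_sum_def exp_freq_periodic sum_distrib_right)
  also have "\<dots> = (\<Sum>j\<in>shifts. integral {0..1} (\<lambda>x. ?h (x + of_int j)))"
  proof (rule integral_sum)
    show "finite shifts" by (simp add: shifts_def)
    fix j show "(\<lambda>x. ?h (x + of_int j)) integrable_on {0..1}"
      by (intro integrable_continuous_real continuous_on_compose2[OF cont_h[of UNIV]])
        (auto intro: continuous_intros)
  qed
  also have "\<dots> = (\<Sum>j\<in>shifts. integral {of_int j..of_int j + 1} ?h)"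
  proof (rule sum.cong)
    fix j
    have "integral {0..1} (\<lambda>x. ?h (x + of_int j)) = integral {0..1} (?h \<circ> (+) (of_int j))"
      by (simp add: o_def add.commute)
    then show "integral {0..1} (\<lambda>x. ?h (x + of_int j)) = integral {of_int j..of_int j + 1} ?h"
      by (simp add: integral_shift_Icc_real add.commute)
  qed simp
  also have "shifts = {(-int N - 2)..<(-int N - 2) + int (2*N+5)}" by (auto simp: shifts_def)
  also have "(\<Sum>j\<in>{(-int N - 2)..<(-int N - 2) + int (2*N+5)}. integral {of_int j..of_int j + 1} ?h)
      = integral {of_int (-int N - 2)..of_int (-int N - 2) + real (2*N+5)} ?h"
    by (rule sum_integrals_unit_intervals[OF cont_h])
  also have "{of_int (-int N - 2)..of_int (-int N - 2) + real (2*N+5)} = {- real N - 2..real N + 3}"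
    by auto
  finally show ?thesis .
qed

definition per_kinks :: "real set" where "per_kinks = (\<Union>j\<in>shifts. (\<lambda>t. t - of_int j) ` T)"

lemma finite_per_kinks: "finite per_kinks"
  unfolding per_kinks_def shifts_def using finite_T by auto

lemma has_vector_derivative_per:
  assumes x: "x \<in> {-1<..<2} - per_kinks"
  shows "(per f has_vector_derivative Dop 1 (per f) x) (at x)"
proof -
  have "DERIV (\<lambda>x. f (x + of_int j)) x :> deriv f (x + of_int j)" if j: "j \<in> shifts" for j
  proof -
    have "x + of_int j \<notin> T"
      using x j unfolding per_kinks_def by force
    then have "DERIV f (x + of_int j) :> deriv f (x + of_int j)"
      using differentiable DERIV_deriv_iff_real_differentiable by blast
    then show ?thesis by (simp add: DERIV_shift)
  qed
  then have "DERIV per_sum x :> (\<Sum>j\<in>shifts. deriv f (x + of_int j))"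
    unfolding per_sum_def by (intro DERIV_sum) auto
  then have "((\<lambda>x. complex_of_real (per_sum x)) has_vector_derivative
      of_real (\<Sum>j\<in>shifts. deriv f (x + of_int j))) (at x)"
    by (rule has_vector_derivative_of_real)
  then have d: "(per f has_vector_derivative of_real (\<Sum>j\<in>shifts. deriv f (x + of_int j))) (at x)"
    by (rule has_vector_derivative_transform_within_open[where S="{-1<..<2}"])
      (use x in \<open>auto simp: per_eq_per_sum\<close>)
  then have "Dop 1 (per f) x = of_real (\<Sum>j\<in>shifts. deriv f (x + of_int j))"
    unfolding Dop_def by (simp add: vector_derivative_at)
  with d show ?thesis by simp
qed

lemma per_1_eq_per_0: "per f 1 = per f 0"
proof -
  have "infsum (\<lambda>j::int. f (of_int ((\<lambda>j. j + 1) j))) UNIV = infsum (\<lambda>j::int. f (of_int j)) UNIV"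
    by (rule infsum_reindex_bij_betw) (rule bij_betwI[where g="\<lambda>j. j - 1"], auto)
  then show ?thesis unfolding per_def by (simp add: add.commute)
qed

text \<open>Integration by parts, the boundary terms cancelling by periodicity.\<close>

lemma ip_Dop_1_per_xi:
  assumes "set_integrable lborel {0<..<1} (\<lambda>x. Dop 1 (per f) x * cnj (xi q x))"
  shows "ip (Dop 1 (per f)) (xi q) = freq q * ip (per f) (xi q)"
proof -
  let ?E = "\<lambda>x. exp (- freq q * of_real x)"
  define I where "I = integral {0..1} (\<lambda>x. per f x * ?E x)"
  have ftc: "((\<lambda>x. per f x * (- freq q * ?E x) + Dop 1 (per f) x * ?E x) has_integral
      (per f 1 * ?E 1 - per f 0 * ?E 0)) {0..1}"
  proof (rule fundamental_theorem_of_calculus_strong[OF finite_per_kinks])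
    fix x assume "x \<in> {0..1} - per_kinks"
    then have "x \<in> {-1<..<2} - per_kinks" by auto
    from has_vector_derivative_mult[OF has_vector_derivative_per[OF this]
        has_vector_derivative_exp_linear[of "- freq q" x UNIV]]
    show "((\<lambda>x. per f x * ?E x) has_vector_derivative
            per f x * (- freq q * ?E x) + Dop 1 (per f) x * ?E x) (at x)"
      by simp
  qed (use continuous_on_per_exp[of "- freq q"] in simp_all)
  have "?E 1 = ?E 0" using exp_freq_periodic[of q 0 1] by simp
  then have boundary: "per f 1 * ?E 1 - per f 0 * ?E 0 = 0" by (simp add: per_1_eq_per_0)
  have "((\<lambda>x. per f x * ?E x) has_integral I) {0..1}"
    unfolding I_def by (rule integrable_integral[OF integrable_continuous_real[OF continuous_on_per_exp]])
  from has_integral_add[OF ftc has_integral_mult_right[OF this, of "freq q"]]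
  have "((\<lambda>x. (per f x * (- freq q * ?E x) + Dop 1 (per f) x * ?E x) + freq q * (per f x * ?E x))
      has_integral (0 + freq q * I)) {0..1}"
    by (simp only: boundary)
  then have "((\<lambda>x. Dop 1 (per f) x * ?E x) has_integral (freq q * I)) {0..1}"
    by (simp add: algebra_simps)
  moreover have "ip (Dop 1 (per f)) (xi q) = integral {0<..<1} (\<lambda>x. Dop 1 (per f) x * ?E x)"
    using assms unfolding ip_def cnj_xi by (simp add: set_borel_integral_eq_integral)
  ultimately show ?thesis
    by (simp add: integral_open_interval_real[symmetric] integral_unique I_def ip_per_xi)
qed

text \<open>Without integrability the Lebesgue integral defining \<open>ip\<close> is \<open>0\<close> by convention;
  both alternatives suffice for the bounds below.\<close>

lemma ip_Dop_1_per_xi_cases: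
  "ip (Dop 1 (per f)) (xi q) = freq q * ip (per f) (xi q) \<or> ip (Dop 1 (per f)) (xi q) = 0"
  using ip_Dop_1_per_xi[of q] not_integrable_integral_eq
  unfolding ip_def set_lebesgue_integral_def set_integrable_def by blast

lemma norm_ip_Dop_per_xi_le:
  assumes "a1 \<le> 1" "a2 \<le> 1"
  shows "cmod (ip (Dop a1 (per f)) (Dop a2 (xi q)))
       \<le> (2 * pi * \<bar>of_int q\<bar>) ^ (a1 + a2) * cmod (ip (per f) (xi q))"
proof -
  have a1: "cmod (ip (Dop a1 (per f)) (xi q)) \<le> (2 * pi * \<bar>of_int q\<bar>) ^ a1 * cmod (ip (per f) (xi q))"
    using assms(1) ip_Dop_1_per_xi_cases[of q]
    by (cases a1) (auto simp: Dop_def norm_mult norm_freq)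
  show ?thesis
  proof (cases a2)
    case 0 then show ?thesis using a1 by (simp add: Dop_def)
  next
    case (Suc n)
    then have "a2 = Suc 0" using assms(2) by simp
    then have "cmod (ip (Dop a1 (per f)) (Dop a2 (xi q)))
        = 2 * pi * \<bar>of_int q\<bar> * cmod (ip (Dop a1 (per f)) (xi q))"
      by (simp add: Dop_1_xi ip_scale_right norm_mult norm_freq)
    also have "\<dots> \<le> 2 * pi * \<bar>of_int q\<bar> * ((2 * pi * \<bar>of_int q\<bar>) ^ a1 * cmod (ip (per f) (xi q)))"
      by (rule mult_left_mono[OF a1]) simp
    finally show ?thesis using \<open>a2 = Suc 0\<close> by (simp add: algebra_simps)
  qed
qed

lemma ip_Dop_1_per_xi_0:
  "ip (Dop 1 (per f)) (Dop 1 (xi 0)) = 0" "ip (Dop 1 (per f)) (xi 0) = 0"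
  using ip_Dop_1_per_xi_cases[of 0] by (auto simp: Dop_1_xi ip_scale_right freq_def ip_def)

end

section \<open>The hat function and its Fourier transform\<close>

lemma hat_eq_0: "1 \<le> \<bar>y\<bar> \<Longrightarrow> hat y = 0"
  unfolding hat_def by simp

lemma hat_neg: "-1 \<le> y \<Longrightarrow> y \<le> 0 \<Longrightarrow> hat y = 1 + y"
  unfolding hat_def by simp

lemma hat_pos: "0 \<le> y \<Longrightarrow> y \<le> 1 \<Longrightarrow> hat y = 1 - y"
  unfolding hat_def by simp

lemma continuous_on_hat: "continuous_on S hat"
  unfolding hat_def[abs_def] by (intro continuous_intros)

lemma hat_differentiable:
  assumes "z \<notin> {-1, 0, 1}"
  shows "hat differentiable (at z)"
proof -
  obtain S a b where S: "open S" "z \<in> S" "\<And>y. y \<in> S \<Longrightarrow> a * y + b = hat y"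
  proof -
    consider "z < -1" | "-1 < z" "z < 0" | "0 < z" "z < 1" | "1 < z" using assms by force
    then show ?thesis
    proof cases
      case 1 then show ?thesis by (intro that[of "{..< -1}" 0 0]) (auto simp: hat_eq_0)
    next
      case 2 then show ?thesis by (intro that[of "{-1<..<0}" 1 1]) (auto simp: hat_neg)
    next
      case 3 then show ?thesis by (intro that[of "{0<..<1}" "-1" 1]) (auto simp: hat_pos)
    next
      case 4 then show ?thesis by (intro that[of "{1<..}" 0 0]) (auto simp: hat_eq_0)
    qed
  qed
  have "DERIV (\<lambda>y. a * y + b) z :> a" by (auto intro!: derivative_eq_intros)
  then have "DERIV hat z :> a" by (rule has_field_derivative_transform_within_open[OF _ S])
  then show ?thesis using real_differentiable_def by blast
qed

lemma hat_affine_differentiable: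
  assumes "s * y - k \<notin> {-1, 0, 1}"
  shows "(\<lambda>x. hat (s * x - k)) differentiable (at y)"
  using differentiable_compose[where f=hat and g="\<lambda>x. s * x - k", OF hat_differentiable[OF assms]]
  by (simp add: derivative_intros)

definition affine_exp_primitive :: "complex \<Rightarrow> complex \<Rightarrow> complex \<Rightarrow> real \<Rightarrow> complex" where
  "affine_exp_primitive \<alpha> \<beta> c x =
     (if c = 0 then \<alpha> * of_real x ^ 2 / 2 + \<beta> * of_real x
      else exp (c * of_real x) * ((\<alpha> * of_real x + \<beta>) / c - \<alpha> / c^2))"

lemma affine_exp_has_integral:
  fixes \<alpha> \<beta> c :: complex
  assumes "a \<le> b"
  shows "((\<lambda>x. (\<alpha> * of_real x + \<beta>) * exp (c * of_real x)) has_integral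
           (affine_exp_primitive \<alpha> \<beta> c b - affine_exp_primitive \<alpha> \<beta> c a)) {a..b}"
proof (rule fundamental_theorem_of_calculus[OF assms])
  fix x :: real
  have "((\<lambda>z. if c = 0 then \<alpha> * z ^ 2 / 2 + \<beta> * z else exp (c * z) * ((\<alpha> * z + \<beta>) / c - \<alpha> / c^2))
      has_field_derivative ((\<alpha> * of_real x + \<beta>) * exp (c * of_real x))) (at (of_real x))"
  proof (cases "c = 0")
    case True then show ?thesis
      by simp (rule derivative_eq_intros refl | simp add: field_simps power2_eq_square)+
  next
    case False then show ?thesis
      by simp (rule derivative_eq_intros refl | simp add: field_simps power2_eq_square)+
  qed
  from has_vector_derivative_real_field[OF this]
  show "(affine_exp_primitive \<alpha> \<beta> c has_vector_derivative (\<alpha> * of_real x + \<beta>) * exp (c * of_real x))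
      (at x within {a..b})"
    unfolding affine_exp_primitive_def[abs_def] by (rule has_vector_derivative_at_within)
qed

definition hat_ft :: "real \<Rightarrow> real \<Rightarrow> complex \<Rightarrow> complex" where
  "hat_ft s k c = (if c = 0 then of_real (1 / s) else
     exp (c * of_real (k / s)) * (exp (c / of_real s) + exp (- c / of_real s) - 2) * of_real s / c^2)"

lemma hat_affine_exp_has_integral:
  fixes s k a b :: real and c :: complex
  assumes s: "s > 0" and a: "a \<le> (k - 1) / s" and b: "(k + 1) / s \<le> b"
  shows "((\<lambda>x. of_real (hat (s * x - k)) * exp (c * of_real x)) has_integral hat_ft s k c) {a..b}"
proof -
  define p0 where "p0 = (k - 1) / s"
  define p1 where "p1 = k / s"
  define p2 where "p2 = (k + 1) / s"
  define P1 where "P1 = affine_exp_primitive (of_real s) (1 - of_real k) c"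
  define P2 where "P2 = affine_exp_primitive (- of_real s) (1 + of_real k) c"
  let ?F = "\<lambda>x. of_real (hat (s * x - k)) * exp (c * of_real x)"
  have le: "p0 \<le> p1" "p1 \<le> p2" using s by (auto simp: p0_def p1_def p2_def divide_right_mono)
  have sp: "s * p0 = k - 1" "s * p1 = k" "s * p2 = k + 1" using s by (auto simp: p0_def p1_def p2_def)
  have mono: "s * x \<le> s * y" if "x \<le> y" for x y using that s by simp
  have "(?F has_integral 0) {a..p0}"
    by (rule has_integral_is_0) (use mono sp in \<open>force simp: hat_eq_0\<close>)
  moreover have "(?F has_integral P1 p1 - P1 p0) {p0..p1}"
    unfolding P1_def
  proof (rule has_integral_eq[OF _ affine_exp_has_integral[OF le(1)]])
    fix x assume "x \<in> {p0..p1} "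
    then show "(of_real s * of_real x + (1 - of_real k)) * exp (c * of_real x) = ?F x"
      using mono[of p0 x] mono[of x p1] sp by (simp add: hat_neg)
  qed
  moreover have "(?F has_integral P2 p2 - P2 p1) {p1..p2}"
    unfolding P2_def
  proof (rule has_integral_eq[OF _ affine_exp_has_integral[OF le(2)]])
    fix x assume "x \<in> {p1..p2} "
    then show "(- of_real s * of_real x + (1 + of_real k)) * exp (c * of_real x) = ?F x"
      using mono[of p1 x] mono[of x p2] sp by (simp add: hat_pos)
  qed
  moreover have "(?F has_integral 0) {p2..b}"
    by (rule has_integral_is_0) (use mono sp in \<open>force simp: hat_eq_0\<close>)
  ultimately have "(?F has_integral (0 + (P1 p1 - P1 p0) + (P2 p2 - P2 p1) + 0)) {a..b}"
    using has_integral_combine le a b unfolding p0_def p2_def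
    by (meson has_integral_combine order_trans)
  moreover have "0 + (P1 p1 - P1 p0) + (P2 p2 - P2 p1) + 0 = hat_ft s k c"
  proof (cases "c = 0")
    case True then show ?thesis
      using s by (simp add: P1_def P2_def affine_exp_primitive_def hat_ft_def p0_def p1_def p2_def
          field_simps power2_eq_square)
  next
    case False
    have "exp (c * of_real p0) = exp (c * of_real p1) * exp (- c / of_real s)"
      "exp (c * of_real p2) = exp (c * of_real p1) * exp (c / of_real s)"
      using s by (simp_all add: p0_def p1_def p2_def exp_add[symmetric] field_simps)
    with False s show ?thesis
      by (simp add: P1_def P2_def affine_exp_primitive_def hat_ft_def p0_def p1_def p2_def
          field_simps power2_eq_square)
  qed
  ultimately show ?thesis by simp
qed

lemma hat_ft_0: "hat_ft s k 0 = of_real (1 / s)"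
  by (simp add: hat_ft_def)

lemma norm_hat_ft_freq:
  assumes s: "s > 0" and q: "q \<noteq> 0"
  shows "cmod (hat_ft s k (- freq q)) = s * sin (pi * of_int q / s) ^ 2 / (pi * of_int q) ^ 2"
proof -
  define \<theta> where "\<theta> = - (2 * pi * of_int q / s)"
  have "freq q / of_real s = - (\<i> * of_real \<theta>)"
    using s by (simp add: freq_def \<theta>_def field_simps)
  then have "exp (- freq q / of_real s) = cis \<theta>" "exp (- (- freq q) / of_real s) = cis (- \<theta>)"
    by (simp_all add: cis_conv_exp)
  then have "exp (- freq q / of_real s) + exp (- (- freq q) / of_real s) - 2 = of_real (2 * cos \<theta> - 2)"
    by (simp add: complex_eq_iff)
  moreover have "cos \<theta> = 1 - 2 * sin (pi * of_int q / s) ^ 2"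
    using cos_double_sin[of "pi * of_int q / s"] by (simp add: \<theta>_def mult.assoc)
  moreover have "freq q \<noteq> 0" using q by (simp add: freq_def)
  ultimately have "hat_ft s k (- freq q)
      = exp (- freq q * of_real (k / s)) * of_real (- 4 * sin (pi * of_int q / s) ^ 2) * of_real s / freq q ^ 2"
    by (simp add: hat_ft_def)
  moreover have "cmod (exp (- freq q * of_real (k / s))) = 1"
    by (simp add: norm_exp_eq_Re freq_def)
  ultimately have "cmod (hat_ft s k (- freq q)) = \<bar>- 4 * sin (pi * of_int q / s) ^ 2\<bar> * \<bar>s\<bar> / cmod (freq q ^ 2)"
    by (simp only: norm_mult norm_divide norm_of_real mult_1)
  then have "cmod (hat_ft s k (- freq q)) = 4 * sin (pi * of_int q / s) ^ 2 * s / cmod (freq q ^ 2)"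
    using s by simp
  also have "cmod (freq q ^ 2) = 4 * (pi * of_int q) ^ 2"
    by (simp add: norm_power norm_freq power_mult_distrib)
  finally show ?thesis by simp
qed

lemma sin_sq_le_abs_powr:
  fixes t \<gamma> :: real
  assumes "0 \<le> \<gamma>" "\<gamma> \<le> 2"
  shows "sin t ^ 2 \<le> \<bar>t\<bar> powr \<gamma>"
proof (cases "\<bar>t\<bar> \<ge> 1")
  case True
  have "sin t ^ 2 \<le> 1" using sin_cos_squared_add[of t] zero_le_power2[of "cos t"] by linarith
  also have "1 \<le> \<bar>t\<bar> powr \<gamma>" using True assms by (simp add: ge_one_powr_ge_zero)
  finally show ?thesis .
next
  case False
  have "sin t ^ 2 \<le> \<bar>t\<bar> ^ 2"
    using abs_sin_x_le_abs_x[of t] by (metis abs_ge_zero power2_abs power_mono)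
  also have "\<dots> \<le> \<bar>t\<bar> powr \<gamma>"
  proof (cases "t = 0")
    case False
    then have "\<bar>t\<bar> ^ 2 = \<bar>t\<bar> powr 2" by (simp add: powr_realpow)
    also have "\<dots> \<le> \<bar>t\<bar> powr \<gamma>" using \<open>\<not> 1 \<le> \<bar>t\<bar>\<close> assms by (intro powr_mono') auto
    finally show ?thesis .
  qed simp
  finally show ?thesis .
qed

lemma scaled_sin_sq_le:
  assumes s: "s > 0" and q: "q \<noteq> 0" and "0 \<le> \<gamma>" "\<gamma> \<le> 2"
  shows "s * sin (pi * of_int q / s) ^ 2 / (pi * of_int q) ^ 2
       \<le> s powr (1 - \<gamma>) * \<bar>pi * of_int q\<bar> powr (\<gamma> - 2)"
proof -
  define P where "P = \<bar>pi * of_int q\<bar>"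
  have P: "P > 0" using q by (simp add: P_def)
  have "\<bar>pi * of_int q / s\<bar> = P / s" using s by (simp add: P_def)
  then have "sin (pi * of_int q / s) ^ 2 \<le> (P / s) powr \<gamma>"
    using sin_sq_le_abs_powr[OF assms(3,4), of "pi * of_int q / s"] by simp
  then have "s * sin (pi * of_int q / s) ^ 2 / (pi * of_int q) ^ 2 \<le> s * (P / s) powr \<gamma> / P ^ 2"
    using s P by (simp add: P_def divide_right_mono)
  also have "\<dots> = s powr (1 - \<gamma>) * P powr (\<gamma> - 2)"
  proof -
    have quot_powr: "(P / s) powr \<gamma> = P powr \<gamma> / s powr \<gamma>" using s P by (simp add: powr_divide)
    have s_powr: "s powr (1 - \<gamma>) = s / s powr \<gamma>" using s by (simp add: powr_diff)
    have P_powr: "P powr (\<gamma> - 2) = P powr \<gamma> / P ^ 2"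
      using powr_realpow[OF P, of 2] by (simp add: powr_diff)
    have "s powr \<gamma> > 0" "P ^ 2 > 0" using s P by auto
    then show ?thesis unfolding quot_powr s_powr P_powr by (simp add: divide_simps)
  qed
  finally show ?thesis by (simp add: P_def)
qed

section \<open>Combinations of dilated and translated hat functions\<close>

locale hat_combination =
  fixes f :: "real \<Rightarrow> real" and J :: "'a set" and w m :: "'a \<Rightarrow> real" and s :: real
  assumes f_eq: "f = (\<lambda>x. \<Sum>j\<in>J. w j * hat (s * x - m j))"
    and finite_J: "finite J"
    and s_pos: "0 < s"
begin

definition radius :: nat where "radius = nat \<lceil>(\<Sum>j\<in>J. \<bar>m j\<bar> + 1) / s\<rceil>"

definition kinks :: "real set" where
  "kinks = (\<Union>j\<in>J. {(m j - 1) / s, m j / s, (m j + 1) / s})"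

lemma node_le_radius:
  assumes "j \<in> J"
  shows "(\<bar>m j\<bar> + 1) / s \<le> real radius"
proof -
  have "\<bar>m j\<bar> + 1 \<le> (\<Sum>j\<in>J. \<bar>m j\<bar> + 1)"
    using assms finite_J by (intro member_le_sum) auto
  then have "(\<bar>m j\<bar> + 1) / s \<le> (\<Sum>j\<in>J. \<bar>m j\<bar> + 1) / s"
    using s_pos by (simp add: divide_right_mono)
  also have "\<dots> \<le> real radius"
    unfolding radius_def by linarith
  finally show ?thesis .
qed

sublocale pw_differentiable_bump f radius kinks
proof
  show "continuous_on UNIV f"
    unfolding f_eq by (intro continuous_intros continuous_on_compose2[OF continuous_on_hat]) auto
next
  fix y :: real assume y: "real radius < \<bar>y\<bar>"
  have "hat (s * y - m j) = 0" if "j \<in> J" for j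
  proof (rule hat_eq_0)
    have "\<bar>m j\<bar> + 1 \<le> s * real radius"
      using node_le_radius[OF that] s_pos by (simp add: field_simps)
    then have "\<bar>m j\<bar> + 1 < s * \<bar>y\<bar>"
      using mult_strict_left_mono[OF y s_pos] by linarith
    then show "1 \<le> \<bar>s * y - m j\<bar>"
      using s_pos by (simp add: abs_mult)
  qed
  then show "f y = 0" unfolding f_eq by simp
next
  show "finite kinks" unfolding kinks_def using finite_J by simp
next
  fix y :: real assume y: "y \<notin> kinks"
  have "(\<lambda>x. hat (s * x - m j)) differentiable (at y)" if "j \<in> J" for j
  proof (rule hat_affine_differentiable)
    show "s * y - m j \<notin> {-1, 0, 1}"
      using y that s_pos unfolding kinks_def by (auto simp: field_simps)
  qed
  then show "f differentiable (at y)"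
    unfolding f_eq using finite_J by (intro differentiable_sum differentiable_mult differentiable_const) auto
qed

lemma ip_per_xi_hat_ft: "ip (per f) (xi q) = (\<Sum>j\<in>J. of_real (w j) * hat_ft s (m j) (- freq q))"
proof -
  have "((\<lambda>x. \<Sum>j\<in>J. of_real (w j) * (of_real (hat (s * x - m j)) * exp (- freq q * of_real x)))
      has_integral (\<Sum>j\<in>J. of_real (w j) * hat_ft s (m j) (- freq q)))
      {- real radius - 2..real radius + 3}"
  proof (intro has_integral_sum has_integral_mult_right hat_affine_exp_has_integral s_pos finite_J)
    fix j assume "j \<in> J"
    then have "\<bar>m j\<bar> + 1 \<le> real radius * s"
      using node_le_radius s_pos by (simp add: field_simps)
    then show "- real radius - 2 \<le> (m j - 1) / s" "(m j + 1) / s \<le> real radius + 3"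
      using s_pos by (simp_all add: field_simps)
  qed
  moreover have "(\<lambda>x. of_real (f x) * exp (- freq q * of_real x))
      = (\<lambda>x. \<Sum>j\<in>J. of_real (w j) * (of_real (hat (s * x - m j)) * exp (- freq q * of_real x)))"
    by (simp add: f_eq sum_distrib_right mult.assoc)
  ultimately show ?thesis
    by (simp add: ip_per_xi_eq_integral integral_unique)
qed

lemma ip_per_xi_0: "ip (per f) (xi 0) = of_real ((\<Sum>j\<in>J. w j) / s)"
  unfolding ip_per_xi_hat_ft by (simp add: freq_def hat_ft_0 sum_divide_distrib)

lemma norm_ip_per_xi_le:
  assumes q: "q \<noteq> 0" and "0 \<le> \<gamma>" "\<gamma> \<le> 2"
  shows "cmod (ip (per f) (xi q)) \<le> (\<Sum>j\<in>J. \<bar>w j\<bar>) * s powr (1 - \<gamma>) * \<bar>pi * of_int q\<bar> powr (\<gamma> - 2)"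
proof -
  have "cmod (ip (per f) (xi q)) \<le> (\<Sum>j\<in>J. \<bar>w j\<bar> * cmod (hat_ft s (m j) (- freq q)))"
    unfolding ip_per_xi_hat_ft by (rule order.trans[OF norm_sum]) (simp add: norm_mult)
  also have "\<dots> = (\<Sum>j\<in>J. \<bar>w j\<bar>) * (s * sin (pi * of_int q / s) ^ 2 / (pi * of_int q) ^ 2)"
    by (simp only: norm_hat_ft_freq[OF s_pos q] sum_distrib_right)
  also have "\<dots> \<le> (\<Sum>j\<in>J. \<bar>w j\<bar>) * (s powr (1 - \<gamma>) * \<bar>pi * of_int q\<bar> powr (\<gamma> - 2))"
    using assms s_pos by (intro mult_left_mono scaled_sin_sq_le sum_nonneg) auto
  finally show ?thesis by (simp add: mult.assoc)
qed

lemma norm_ip_Dop_per_xi_le_powr: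
  assumes q: "q \<noteq> 0" and a: "a1 \<le> 1" "a2 \<le> 1" and \<gamma>: "0 \<le> \<gamma>" "\<gamma> \<le> 2"
  shows "cmod (ip (Dop a1 (per f)) (Dop a2 (xi q)))
       \<le> 2 ^ (a1 + a2) * (\<Sum>j\<in>J. \<bar>w j\<bar>) * s powr (1 - \<gamma>)
         * \<bar>pi * of_int q\<bar> powr (\<gamma> - 2 + real a1 + real a2)"
proof -
  define P where "P = \<bar>pi * of_int q\<bar>"
  define C where "C = (\<Sum>j\<in>J. \<bar>w j\<bar>) * s powr (1 - \<gamma>)"
  have P: "P > 0" using q by (simp add: P_def)
  have "2 * pi * \<bar>of_int q\<bar> = 2 * P" by (simp add: P_def abs_mult)
  then have "cmod (ip (Dop a1 (per f)) (Dop a2 (xi q))) \<le> (2 * P) ^ (a1 + a2) * cmod (ip (per f) (xi q))"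
    using norm_ip_Dop_per_xi_le[OF a, of q] by (simp only:)
  also have "\<dots> \<le> (2 * P) ^ (a1 + a2) * (C * P powr (\<gamma> - 2))"
    using norm_ip_per_xi_le[OF q \<gamma>] P by (intro mult_left_mono) (simp_all add: C_def P_def)
  also have "\<dots> = 2 ^ (a1 + a2) * C * P powr (\<gamma> - 2 + real a1 + real a2)"
  proof -
    have "P powr (\<gamma> - 2 + real a1 + real a2) = P powr (\<gamma> - 2) * P ^ (a1 + a2)"
      using P by (simp add: powr_add powr_realpow[symmetric] add.assoc)
    then show ?thesis by (simp add: power_mult_distrib mult_ac)
  qed
  finally show ?thesis by (simp add: C_def P_def)
qed

end

section \<open>The scaling functions and wavelets of order (2,2)\<close>

lemma phi_lk_hat_combination:
  "hat_combination (phi_lk l k) {0::int} (\<lambda>_. 2 powr (real l / 2)) (\<lambda>_. of_int k) (2 ^ l)"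
  by unfold_locales (simp_all add: phi_lk_def fun_eq_iff)

lemma psi_lk_hat_combination:
  "hat_combination (psi_lk l k) {-1..3::int} (\<lambda>j. 2 powr (real l / 2) * bfilt j)
     (\<lambda>j. of_int (2 * k + j)) (2 ^ (l + 1))"
  by unfold_locales (simp_all add: psi_lk_def psi_def fun_eq_iff sum_distrib_left algebra_simps)

lemma bfilt_sums:
  "(\<Sum>j\<in>{-1..3::int}. bfilt j) = 0" "(\<Sum>j\<in>{-1..3::int}. \<bar>bfilt j\<bar>) = 3"
proof -
  have "{-1..3::int} = {-1, 0, 1, 2, 3}" by auto
  then show "(\<Sum>j\<in>{-1..3::int}. bfilt j) = 0" "(\<Sum>j\<in>{-1..3::int}. \<bar>bfilt j\<bar>) = 3"
    by (simp_all add: bfilt_def)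
qed

lemma bnorm0_eq: "bnorm0 = 5"
proof -
  have "{j\<in>{-1..3::int}. bfilt j \<noteq> 0} = {-1, 0, 1, 2, 3}" by (auto simp: bfilt_def)
  then show ?thesis unfolding bnorm0_def by simp
qed

lemma bnorm2_eq: "bnorm2 = sqrt (23 / 8)"
proof -
  have "{-1..3::int} = {-1, 0, 1, 2, 3}" by auto
  then show ?thesis by (simp add: bnorm2_def bfilt_def power2_eq_square)
qed

lemma three_le_bnorm2_sqrt_bnorm0: "3 \<le> bnorm2 * sqrt (real bnorm0)"
proof -
  have "bnorm2 * sqrt (real bnorm0) = sqrt (115 / 8)"
    by (simp add: bnorm2_eq bnorm0_eq real_sqrt_mult[symmetric])
  moreover have "3 \<le> sqrt (115 / 8 :: real)" by (rule real_le_rsqrt) simp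
  ultimately show ?thesis by simp
qed

lemma powr_two_pow: "((2::real) ^ n) powr x = 2 powr (real n * x)"
  by (simp add: powr_realpow[symmetric] powr_powr)

lemma phi_lk_bound:
  assumes "q \<noteq> 0" "a1 \<le> 1" "a2 \<le> 1" "0 \<le> \<gamma>" "\<gamma> \<le> 2"
  shows "cmod (ip (Dop a1 (per (phi_lk l k))) (Dop a2 (xi q)))
       \<le> 2 ^ (a1 + a2) * 2 powr ((3/2 - \<gamma>) * real l)
         * \<bar>pi * of_int q\<bar> powr (\<gamma> - 2 + real a1 + real a2)"
proof -
  let ?P = "\<bar>pi * of_int q\<bar> powr (\<gamma> - 2 + real a1 + real a2)"
  have "cmod (ip (Dop a1 (per (phi_lk l k))) (Dop a2 (xi q)))
      \<le> 2 ^ (a1 + a2) * (2 powr (real l / 2 + real l * (1 - \<gamma>))) * ?P"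
    using hat_combination.norm_ip_Dop_per_xi_le_powr[OF phi_lk_hat_combination[of l k] assms]
    by (simp add: powr_two_pow powr_add mult.assoc)
  also have "real l / 2 + real l * (1 - \<gamma>) = (3/2 - \<gamma>) * real l"
    by (simp add: field_simps)
  finally show ?thesis .
qed

lemma psi_lk_bound:
  assumes "q \<noteq> 0" "a1 \<le> 1" "a2 \<le> 1" "0 \<le> \<gamma>" "\<gamma> \<le> 2"
  shows "cmod (ip (Dop a1 (per (psi_lk l k))) (Dop a2 (xi q)))
       \<le> 2 powr (real a1 + real a2 + 1 - \<gamma>) * bnorm2 * sqrt (real bnorm0)
         * 2 powr ((3/2 - \<gamma>) * real l)
         * \<bar>pi * of_int q\<bar> powr (\<gamma> - 2 + real a1 + real a2)"
proof -
  let ?P = "\<bar>pi * of_int q\<bar> powr (\<gamma> - 2 + real a1 + real a2)"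
  let ?L = "2 powr (real a1 + real a2 + 1 - \<gamma>) * 2 powr ((3/2 - \<gamma>) * real l)"
  have "(\<Sum>j\<in>{-1..3::int}. \<bar>2 powr (real l / 2) * bfilt j\<bar>) = 3 * 2 powr (real l / 2)"
    by (simp add: abs_mult sum_distrib_left[symmetric] bfilt_sums)
  moreover have "(2::real) ^ (a1 + a2) = 2 powr real (a1 + a2)"
    by (rule powr_realpow[symmetric]) simp
  ultimately have "cmod (ip (Dop a1 (per (psi_lk l k))) (Dop a2 (xi q)))
      \<le> 2 powr real (a1 + a2) * (3 * 2 powr (real l / 2)) * 2 powr (real (l + 1) * (1 - \<gamma>)) * ?P"
    using hat_combination.norm_ip_Dop_per_xi_le_powr[OF psi_lk_hat_combination[of l k] assms]
    by (simp only: powr_two_pow)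
  also have "2 powr real (a1 + a2) * (3 * 2 powr (real l / 2)) * 2 powr (real (l + 1) * (1 - \<gamma>))
      = 3 * 2 powr (real (a1 + a2) + real l / 2 + real (l + 1) * (1 - \<gamma>))"
    by (simp add: powr_add mult_ac)
  also have "real (a1 + a2) + real l / 2 + real (l + 1) * (1 - \<gamma>)
      = (real a1 + real a2 + 1 - \<gamma>) + (3/2 - \<gamma>) * real l"
    by (simp add: field_simps)
  also have "3 * 2 powr ((real a1 + real a2 + 1 - \<gamma>) + (3/2 - \<gamma>) * real l) * ?P
      \<le> bnorm2 * sqrt (real bnorm0) * ?L * ?P"
    by (simp add: powr_add mult_right_mono three_le_bnorm2_sqrt_bnorm0)
  finally show ?thesis by (simp add: mult_ac)
qed

lemma norm_ip_per_phi_lk_xi_0: "cmod (ip (per (phi_lk l k)) (xi 0)) = 2 powr (- real l / 2)"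
proof -
  have "cmod (ip (per (phi_lk l k)) (xi 0)) = 2 powr (real l / 2) / 2 powr real l"
    using hat_combination.ip_per_xi_0[OF phi_lk_hat_combination[of l k]]
    by (simp add: norm_divide norm_power powr_realpow)
  also have "\<dots> = 2 powr (- real l / 2)"
    by (simp add: powr_diff[symmetric])
  finally show ?thesis .
qed

lemma ip_per_psi_lk_xi_0: "ip (per (psi_lk l k)) (xi 0) = 0"
  using hat_combination.ip_per_xi_0[OF psi_lk_hat_combination[of l k]]
  by (simp add: sum_distrib_left[symmetric] bfilt_sums)

text \<open>The bounds hold at every level and for every translation.\<close>

theorem lemma4p1:
  fixes l0 l :: nat and k :: int
  assumes "l0 \<ge> 2" and "l \<ge> l0" and "0 \<le> k" and "k < 2 ^ l"
  shows "(\<forall>q::int. \<forall>a1 a2::nat. \<forall>\<gamma>::real.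
            q \<noteq> 0 \<and> a1 \<le> 1 \<and> a2 \<le> 1 \<and> 0 \<le> \<gamma> \<and> \<gamma> \<le> 2 \<longrightarrow>
              cmod (ip (Dop a1 (per (phi_lk l k))) (Dop a2 (xi q)))
                \<le> 2 ^ (a1 + a2) * 2 powr ((3/2 - \<gamma>) * real l)
                  * \<bar>pi * of_int q\<bar> powr (\<gamma> - 2 + real a1 + real a2)
            \<and> cmod (ip (Dop a1 (per (psi_lk l k))) (Dop a2 (xi q)))
                \<le> 2 powr (real a1 + real a2 + 1 - \<gamma>) * bnorm2 * sqrt (real bnorm0)
                  * 2 powr ((3/2 - \<gamma>) * real l)
                  * \<bar>pi * of_int q\<bar> powr (\<gamma> - 2 + real a1 + real a2))
       \<and> cmod (ip (Dop 1 (per (phi_lk l k))) (Dop 1 (xi 0))) = 0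
       \<and> cmod (ip (Dop 1 (per (psi_lk l k))) (Dop 1 (xi 0))) = 0
       \<and> cmod (ip (Dop 1 (per (phi_lk l k))) (xi 0)) = 0
       \<and> cmod (ip (Dop 1 (per (psi_lk l k))) (xi 0)) = 0
       \<and> cmod (ip (per (phi_lk l k)) (xi 0)) = 2 powr (- real l / 2)
       \<and> cmod (ip (per (psi_lk l k)) (xi 0)) = 0"
proof -
  interpret phi: hat_combination "phi_lk l k" "{0::int}" "\<lambda>_. 2 powr (real l / 2)" "\<lambda>_. of_int k" "2 ^ l"
    by (rule phi_lk_hat_combination)
  interpret psi: hat_combination "psi_lk l k" "{-1..3::int}" "\<lambda>j. 2 powr (real l / 2) * bfilt j"
      "\<lambda>j. of_int (2 * k + j)" "2 ^ (l + 1)"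
    by (rule psi_lk_hat_combination)
  show ?thesis
    using phi_lk_bound psi_lk_bound norm_ip_per_phi_lk_xi_0 ip_per_psi_lk_xi_0
      phi.ip_Dop_1_per_xi_0 psi.ip_Dop_1_per_xi_0
    by simp
qed

end
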